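(* Let $G=(V,E)$ be a connected, locally finite simple graph, let $x\in V$, let $u:V\to\mathbb{R}$ be harmonic, and let $0\le a\le b<\infty$ be integers. Define, for $k\ge 0$, $$N(k) = \sum_{y:\, d(x,y)=k+1} d_{\mathrm{in}}(y)\, u(y)^2 - \sum_{y:\, d(x,y)=k} d_{\mathrm{out}}(y)\, u(y)^2 .$$ If $G$ is locally expansive in $\{v\in V: a\le d(x,v)\le b\}$, i.e. $d_{\mathrm{out}}(v)\ge d_{\mathrm{in}}(v)$ for every $v$ with $a\le d(x,v)\le b$, then $$\sum_{y:\,d(x,y)=b+1} d_{\mathrm{in}}(y)\, u(y)^2 \ge (b-a+1)N(a) + \sum_{y:\,d(x,y)=a} d_{\mathrm{out}}(y)\, u(y)^2.$$ If $G$ is locally contractive in the same region, i.e. $d_{\mathrm{out}}(v)\le d_{\mathrm{in}}(v)$ for every $v$ with $a\le d(x,v)\le b$, then $$\sum_{y:\,d(x,y)=b+1} d_{\mathrm{in}}(y)\, u(y)^2 \le (b-a+1)N(b) + \sum_{y:\,d(x,y)=a} d_{\mathrm{out}}(y)\, u(y)^2.$$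
   Context: $d(\cdot,\cdot)$ is the graph distance. $u$ is harmonic if $\sum_{w:(v,w)\in E}(u(v)-u(w))=0$ for every $v\in V$. With $x$ fixed, $d_{\mathrm{in}}(v)=\#\{w: (w,v)\in E,\ d(w,x)=d(v,x)-1\}$ and $d_{\mathrm{out}}(v)=\#\{w: (w,v)\in E,\ d(w,x)=d(v,x)+1\}$. *)

theory Defs
  imports Main Complex_Main
begin

text \<open>A graph on vertex type 'a is given by an adjacency relation E (vertex set = UNIV).\<close>

inductive walk_len :: "('a \<Rightarrow> 'a \<Rightarrow> bool) \<Rightarrow> nat \<Rightarrow> 'a \<Rightarrow> 'a \<Rightarrow> bool" for E where
  walk_nil: "walk_len E 0 v v"
| walk_step: "walk_len E n v w \<Longrightarrow> E w z \<Longrightarrow> walk_len E (Suc n) v z"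

definition simple_graph :: "('a \<Rightarrow> 'a \<Rightarrow> bool) \<Rightarrow> bool" where
  "simple_graph E \<longleftrightarrow> (\<forall>v w. E v w \<longrightarrow> E w v) \<and> (\<forall>v. \<not> E v v)"

definition locally_finite :: "('a \<Rightarrow> 'a \<Rightarrow> bool) \<Rightarrow> bool" where
  "locally_finite E \<longleftrightarrow> (\<forall>v. finite {w. E v w})"

definition connected_graph :: "('a \<Rightarrow> 'a \<Rightarrow> bool) \<Rightarrow> bool" where
  "connected_graph E \<longleftrightarrow> (\<forall>v w. \<exists>n. walk_len E n v w)"

definition gdist :: "('a \<Rightarrow> 'a \<Rightarrow> bool) \<Rightarrow> 'a \<Rightarrow> 'a \<Rightarrow> nat" where
  "gdist E v w = (LEAST n. walk_len E n v w)"

definition harmonic :: "('a \<Rightarrow> 'a \<Rightarrow> bool) \<Rightarrow> ('a \<Rightarrow> real) \<Rightarrow> bool" where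
  "harmonic E u \<longleftrightarrow> (\<forall>v. (\<Sum>w\<in>{w. E v w}. u v - u w) = 0)"

definition d_in :: "('a \<Rightarrow> 'a \<Rightarrow> bool) \<Rightarrow> 'a \<Rightarrow> 'a \<Rightarrow> nat" where
  "d_in E x v = card {w. E w v \<and> gdist E w x + 1 = gdist E v x}"

definition d_out :: "('a \<Rightarrow> 'a \<Rightarrow> bool) \<Rightarrow> 'a \<Rightarrow> 'a \<Rightarrow> nat" where
  "d_out E x v = card {w. E w v \<and> gdist E w x = gdist E v x + 1}"

definition in_sum :: "('a \<Rightarrow> 'a \<Rightarrow> bool) \<Rightarrow> 'a \<Rightarrow> ('a \<Rightarrow> real) \<Rightarrow> nat \<Rightarrow> real" where
  "in_sum E x u k = (\<Sum>y\<in>{y. gdist E x y = k}. real (d_in E x y) * (u y)\<^sup>2)"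

definition out_sum :: "('a \<Rightarrow> 'a \<Rightarrow> bool) \<Rightarrow> 'a \<Rightarrow> ('a \<Rightarrow> real) \<Rightarrow> nat \<Rightarrow> real" where
  "out_sum E x u k = (\<Sum>y\<in>{y. gdist E x y = k}. real (d_out E x y) * (u y)\<^sup>2)"

definition Nflux :: "('a \<Rightarrow> 'a \<Rightarrow> bool) \<Rightarrow> 'a \<Rightarrow> ('a \<Rightarrow> real) \<Rightarrow> nat \<Rightarrow> real" where
  "Nflux E x u k = in_sum E x u (k + 1) - out_sum E x u k"

end

theory Submission
  imports Defs
begin

text \<open>
  Let \<open>S k\<close> be the sphere of radius \<open>k\<close> about \<open>x\<close>. Counting each edge between \<open>S k\<close> and
  \<open>S (k+1)\<close> from both ends shows that \<open>N(k)\<close> is the total increment of \<open>u\<^sup>2\<close> along these edges,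
  while \<open>in_sum (k+1) = N(k) + out_sum k\<close> holds by definition. As \<open>u\<close> is harmonic, \<open>u\<^sup>2\<close> is
  subharmonic; summing its Laplacian over \<open>S (k+1)\<close>, the edges inside \<open>S (k+1)\<close> cancel in pairs
  and what remains is \<open>N(k+1) - N(k) \<ge> 0\<close>. Local expansion (contraction) gives
  \<open>in_sum k \<le> out_sum k\<close> (resp. \<open>\<ge>\<close>), so iterating the identity from \<open>a\<close> to \<open>b\<close> and using
  the monotonicity of \<open>N\<close> yields the two bounds.
\<close>

lemma growth_lower_bound:
  fixes inc out :: "nat \<Rightarrow> real"
  assumes mono: "mono (\<lambda>k. inc (Suc k) - out k)"
    and expansive: "\<And>k. a < k \<Longrightarrow> k \<le> b \<Longrightarrow> inc k \<le> out k"
    and "a \<le> b"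
  shows "real (b - a + 1) * (inc (Suc a) - out a) + out a \<le> inc (Suc b)"
  using \<open>a \<le> b\<close> expansive
proof (induction b rule: dec_induct)
  case base
  then show ?case by simp
next
  case (step b)
  have "real (Suc b - a + 1) * (inc (Suc a) - out a) + out a
      = real (b - a + 1) * (inc (Suc a) - out a) + out a + (inc (Suc a) - out a)"
    using step.hyps by (simp add: Suc_diff_le algebra_simps)
  also have "\<dots> \<le> inc (Suc b) + (inc (Suc (Suc b)) - out (Suc b))"
    using step.IH step.prems monoD[OF mono, of a "Suc b"] step.hyps by fastforce
  also have "\<dots> \<le> inc (Suc (Suc b))"
    using step.prems step.hyps by simp
  finally show ?case .
qed

lemma growth_upper_bound:
  fixes inc out :: "nat \<Rightarrow> real"
  assumes mono: "mono (\<lambda>k. inc (Suc k) - out k)"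
    and contractive: "\<And>k. a < k \<Longrightarrow> k \<le> b \<Longrightarrow> out k \<le> inc k"
    and "a \<le> b"
  shows "inc (Suc b) \<le> real (b - a + 1) * (inc (Suc b) - out b) + out a"
  using \<open>a \<le> b\<close> contractive
proof (induction b rule: dec_induct)
  case base
  then show ?case by simp
next
  case (step b)
  have "inc (Suc (Suc b)) \<le> (inc (Suc (Suc b)) - out (Suc b)) + inc (Suc b)"
    using step.prems step.hyps by simp
  also have "\<dots> \<le> (inc (Suc (Suc b)) - out (Suc b))
      + real (b - a + 1) * (inc (Suc b) - out b) + out a"
    using step.IH step.prems by fastforce
  also have "\<dots> \<le> (inc (Suc (Suc b)) - out (Suc b))
      + real (b - a + 1) * (inc (Suc (Suc b)) - out (Suc b)) + out a"
    using monoD[OF mono, of b "Suc b"] by (simp add: mult_left_mono)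
  also have "\<dots> = real (Suc b - a + 1) * (inc (Suc (Suc b)) - out (Suc b)) + out a"
    using step.hyps by (simp add: Suc_diff_le algebra_simps)
  finally show ?case .
qed

lemma walk_len_prepend: "walk_len E n w z \<Longrightarrow> E v w \<Longrightarrow> walk_len E (Suc n) v z"
  by (induction rule: walk_len.induct) (auto intro: walk_len.intros)

lemma walk_len_reverse:
  "walk_len E n v w \<Longrightarrow> (\<And>a b. E a b \<Longrightarrow> E b a) \<Longrightarrow> walk_len E n w v"
  by (induction rule: walk_len.induct) (auto intro: walk_len.intros walk_len_prepend)

lemma walk_len_0_eq: "walk_len E 0 v w \<Longrightarrow> v = w"
  by (erule walk_len.cases) auto

lemma walk_len_SucE:
  assumes "walk_len E (Suc n) v z"
  obtains w where "walk_len E n v w" and "E w z"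
  using assms by (cases rule: walk_len.cases) auto

locale locally_finite_connected_graph =
  fixes E :: "'a \<Rightarrow> 'a \<Rightarrow> bool"
  assumes simple: "simple_graph E"
    and locally_finite: "locally_finite E"
    and connected: "connected_graph E"
begin

lemma adjacent_sym: "E v w \<Longrightarrow> E w v"
  using simple unfolding simple_graph_def by blast

lemma finite_neighbours: "finite {w. E v w}"
  using locally_finite unfolding locally_finite_def by blast

lemma walk_len_gdist: "walk_len E (gdist E v w) v w"
  using connected unfolding gdist_def connected_graph_def by (meson LeastI_ex)

lemma gdist_le_walk_len: "walk_len E n v w \<Longrightarrow> gdist E v w \<le> n"
  unfolding gdist_def by (rule Least_le)

lemma gdist_commute: "gdist E v w = gdist E w v"
proof -
  have "gdist E v w \<le> gdist E w v" for v w
    using gdist_le_walk_len[OF walk_len_reverse[OF walk_len_gdist]] adjacent_sym by blast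
  then show ?thesis
    by (simp add: le_antisym)
qed

lemma gdist_adjacent_le: "E v w \<Longrightarrow> gdist E y w \<le> gdist E y v + 1"
  using gdist_le_walk_len[OF walk_step[OF walk_len_gdist]] by simp

lemma gdist_eq_0_iff: "gdist E y v = 0 \<longleftrightarrow> v = y"
  using walk_len_0_eq[of E y v] walk_len_gdist[of y v] gdist_le_walk_len[OF walk_nil[of E y]]
  by auto

lemma gdist_SucE:
  assumes "gdist E y v = Suc k"
  obtains w where "E w v" and "gdist E y w = k"
proof -
  obtain w where w: "walk_len E k y w" "E w v"
    using walk_len_gdist[of y v] assms by (auto elim: walk_len_SucE)
  have "gdist E y w = k"
    using gdist_le_walk_len[OF w(1)] gdist_adjacent_le[OF w(2), of y] assms by simp
  with w(2) show thesis
    by (rule that)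
qed

abbreviation sphere :: "'a \<Rightarrow> nat \<Rightarrow> 'a set" where
  "sphere x k \<equiv> {y. gdist E x y = k}"

lemma finite_sphere: "finite (sphere x k)"
proof (induction k)
  case 0
  have "sphere x 0 = {x}"
    using gdist_eq_0_iff by auto
  then show ?case
    by simp
next
  case (Suc k)
  have "sphere x (Suc k) \<subseteq> (\<Union>w\<in>sphere x k. {z. E w z})"
    by (auto elim: gdist_SucE)
  moreover have "finite (\<Union>w\<in>sphere x k. {z. E w z})"
    using Suc finite_neighbours by blast
  ultimately show ?case
    by (rule finite_subset)
qed

lemma neighbours_sphere_Suc:
  assumes "v \<in> sphere x (Suc k)"
  shows "{w. E v w} = {w \<in> sphere x k. E v w} \<union> {w \<in> sphere x (Suc k). E v w}
                        \<union> {w \<in> sphere x (Suc (Suc k)). E v w}"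
proof -
  have "gdist E x w \<in> {k, Suc k, Suc (Suc k)}" if "E v w" for w
    using assms gdist_adjacent_le[OF that, of x] gdist_adjacent_le[OF adjacent_sym[OF that], of x]
    by auto
  then show ?thesis
    by auto
qed

lemma d_in_eq_card:
  assumes "v \<in> sphere x (Suc k)"
  shows "d_in E x v = card {w \<in> sphere x k. E v w}"
proof -
  have "{w. E w v \<and> gdist E w x + 1 = gdist E v x} = {w \<in> sphere x k. E v w}"
    using assms adjacent_sym by (auto simp: gdist_commute[of _ x])
  then show ?thesis
    unfolding d_in_def by simp
qed

lemma d_out_eq_card:
  assumes "v \<in> sphere x k"
  shows "d_out E x v = card {w \<in> sphere x (Suc k). E v w}"
proof -
  have "{w. E w v \<and> gdist E w x = gdist E v x + 1} = {w \<in> sphere x (Suc k). E v w}"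
    using assms adjacent_sym by (auto simp: gdist_commute[of _ x])
  then show ?thesis
    unfolding d_out_def by simp
qed

definition edge_sum :: "('a \<Rightarrow> 'a \<Rightarrow> real) \<Rightarrow> 'a set \<Rightarrow> 'a set \<Rightarrow> real" where
  "edge_sum g A B = (\<Sum>v\<in>A. \<Sum>w\<in>{w \<in> B. E v w}. g v w)"

lemma edge_sum_swap:
  assumes "finite A" and "finite B"
  shows "edge_sum g B A = edge_sum (\<lambda>v w. g w v) A B"
proof -
  have "edge_sum g B A = (\<Sum>v\<in>A. \<Sum>w\<in>{w \<in> B. E w v}. g w v)"
    unfolding edge_sum_def by (rule sum.swap_restrict[OF assms(2,1)])
  moreover have "{w \<in> B. E w v} = {w \<in> B. E v w}" for v
    using adjacent_sym by blast
  ultimately show ?thesis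
    unfolding edge_sum_def by simp
qed

lemma edge_sum_difference_antisym:
  assumes "finite A" and "finite B"
  shows "edge_sum (\<lambda>v w. f w - f v) B A = - edge_sum (\<lambda>v w. f w - f v) A B"
  using edge_sum_swap[OF assms, of "\<lambda>v w. f w - f v"]
  unfolding edge_sum_def by (simp add: sum_subtractf)

lemma sum_neighbours_sphere_Suc:
  assumes "A \<subseteq> sphere x (Suc k)"
  shows "(\<Sum>v\<in>A. \<Sum>w\<in>{w. E v w}. g v w)
    = edge_sum g A (sphere x k) + edge_sum g A (sphere x (Suc k))
      + edge_sum g A (sphere x (Suc (Suc k)))"
proof -
  have "(\<Sum>w\<in>{w. E v w}. g v w)
      = (\<Sum>w\<in>{w \<in> sphere x k. E v w}. g v w) + (\<Sum>w\<in>{w \<in> sphere x (Suc k). E v w}. g v w)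
        + (\<Sum>w\<in>{w \<in> sphere x (Suc (Suc k)). E v w}. g v w)" if "v \<in> A" for v
    unfolding neighbours_sphere_Suc[of v, OF subsetD[OF assms that]]
    by (subst sum.union_disjoint, use finite_sphere in auto)+
  then show ?thesis
    unfolding edge_sum_def by (simp add: sum.distrib)
qed

lemma Nflux_eq_edge_sum:
  "Nflux E x u k = edge_sum (\<lambda>v w. (u w)\<^sup>2 - (u v)\<^sup>2) (sphere x k) (sphere x (Suc k))"
proof -
  have "in_sum E x u (Suc k) = edge_sum (\<lambda>v w. (u v)\<^sup>2) (sphere x (Suc k)) (sphere x k)"
    unfolding in_sum_def edge_sum_def by (simp add: d_in_eq_card)
  also have "\<dots> = edge_sum (\<lambda>v w. (u w)\<^sup>2) (sphere x k) (sphere x (Suc k))"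
    by (rule edge_sum_swap[OF finite_sphere finite_sphere])
  finally have "in_sum E x u (Suc k) = edge_sum (\<lambda>v w. (u w)\<^sup>2) (sphere x k) (sphere x (Suc k))" .
  moreover have "out_sum E x u k = edge_sum (\<lambda>v w. (u v)\<^sup>2) (sphere x k) (sphere x (Suc k))"
    unfolding out_sum_def edge_sum_def by (simp add: d_out_eq_card)
  ultimately show ?thesis
    unfolding Nflux_def edge_sum_def by (simp add: sum_subtractf)
qed

lemma harmonic_square_subharmonic:
  assumes "harmonic E u"
  shows "0 \<le> (\<Sum>w\<in>{w. E v w}. (u w)\<^sup>2 - (u v)\<^sup>2)"
proof -
  have "(\<Sum>w\<in>{w. E v w}. (u w)\<^sup>2 - (u v)\<^sup>2)
      = (\<Sum>w\<in>{w. E v w}. (u w - u v)\<^sup>2 - 2 * u v * (u v - u w))"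
    by (rule sum.cong) (auto simp: power2_eq_square algebra_simps)
  also have "\<dots> = (\<Sum>w\<in>{w. E v w}. (u w - u v)\<^sup>2) - 2 * u v * (\<Sum>w\<in>{w. E v w}. u v - u w)"
    unfolding sum_distrib_left by (rule sum_subtractf)
  also have "\<dots> = (\<Sum>w\<in>{w. E v w}. (u w - u v)\<^sup>2)"
    using assms unfolding harmonic_def by simp
  finally show ?thesis
    by (simp add: sum_nonneg)
qed

lemma mono_Nflux:
  assumes "harmonic E u"
  shows "mono (Nflux E x u)"
proof (rule incseq_SucI)
  fix k
  let ?g = "\<lambda>v w. (u w)\<^sup>2 - (u v)\<^sup>2"
  have reverse: "edge_sum ?g (sphere x l) (sphere x m)
      = - edge_sum ?g (sphere x m) (sphere x l)" for l m
    by (rule edge_sum_difference_antisym[OF finite_sphere finite_sphere])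
  have "0 \<le> (\<Sum>v\<in>sphere x (Suc k). \<Sum>w\<in>{w. E v w}. ?g v w)"
    using harmonic_square_subharmonic[OF assms] by (simp add: sum_nonneg)
  also have "\<dots> = edge_sum ?g (sphere x (Suc k)) (sphere x k)
      + edge_sum ?g (sphere x (Suc k)) (sphere x (Suc k)) + Nflux E x u (Suc k)"
    by (simp add: sum_neighbours_sphere_Suc Nflux_eq_edge_sum)
  also have "edge_sum ?g (sphere x (Suc k)) (sphere x k) = - Nflux E x u k"
    unfolding Nflux_eq_edge_sum by (rule reverse)
  also have "edge_sum ?g (sphere x (Suc k)) (sphere x (Suc k)) = 0"
    using reverse[of "Suc k" "Suc k"] by simp
  finally show "Nflux E x u k \<le> Nflux E x u (Suc k)"
    by simp
qed

end

lemma out_sum_ge_in_sum: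
  "(\<And>v. gdist E x v = k \<Longrightarrow> d_in E x v \<le> d_out E x v) \<Longrightarrow> in_sum E x u k \<le> out_sum E x u k"
  unfolding out_sum_def in_sum_def by (auto intro!: sum_mono mult_right_mono)

lemma out_sum_le_in_sum:
  "(\<And>v. gdist E x v = k \<Longrightarrow> d_out E x v \<le> d_in E x v) \<Longrightarrow> out_sum E x u k \<le> in_sum E x u k"
  unfolding out_sum_def in_sum_def by (auto intro!: sum_mono mult_right_mono)

theorem corollary1:
  fixes E :: "'a \<Rightarrow> 'a \<Rightarrow> bool" and x :: 'a and u :: "'a \<Rightarrow> real" and a b :: nat
  assumes "simple_graph E" and "locally_finite E" and "connected_graph E"
    and "harmonic E u" and "a \<le> b"
  shows "((\<forall>v. a \<le> gdist E x v \<and> gdist E x v \<le> b \<longrightarrow> d_out E x v \<ge> d_in E x v) \<longrightarrow>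
            in_sum E x u (b + 1) \<ge> real (b - a + 1) * Nflux E x u a + out_sum E x u a)
       \<and> ((\<forall>v. a \<le> gdist E x v \<and> gdist E x v \<le> b \<longrightarrow> d_out E x v \<le> d_in E x v) \<longrightarrow>
            in_sum E x u (b + 1) \<le> real (b - a + 1) * Nflux E x u b + out_sum E x u a)"
proof -
  interpret locally_finite_connected_graph E
    using assms(1-3) by unfold_locales
  have mono: "mono (\<lambda>k. in_sum E x u (Suc k) - out_sum E x u k)"
    using mono_Nflux[OF assms(4)] unfolding Nflux_def by simp
  show ?thesis
    unfolding Nflux_def
    using growth_lower_bound[OF mono out_sum_ge_in_sum \<open>a \<le> b\<close>]
      growth_upper_bound[OF mono out_sum_le_in_sum \<open>a \<le> b\<close>]
    by auto
qed

end
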